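(* Let $\mathcal{H}_A,\mathcal{H}_1,\mathcal{H}_2$ be finite-dimensional Hilbert spaces and let $\rho$ be a density operator on $\mathcal{H}_A\otimes\mathcal{H}_1\otimes\mathcal{H}_2$. For $k=1,2$ let $\Lambda^{(k)}$ be a positive and trace-preserving linear map on the operators on $\mathcal{H}_k$ (not necessarily completely positive). Let $\{\{M_{a|x}\}_a\}_x$ be a finite collection of POVMs on $\mathcal{H}_A$. Consider the operator $\tilde\rho=(\mathrm{id}_A\otimes\Lambda^{(1)}\otimes\Lambda^{(2)})[\rho]$ and the assemblage with elements $\sigma^{(k)}_{a|x}=\mathrm{tr}_{\mathcal{H}_A,\mathcal{H}_{\neg k}}[(M_{a|x}\otimes\mathbb{I}_1\otimes\mathbb{I}_2)\tilde\rho]$, where $\mathcal{H}_{\neg k}$ denotes the Bob space other than $\mathcal{H}_k$. Then for any finite collections of POVMs $\{\{N^{(1)}_{b_1|y_1}\}_{b_1}\}_{y_1}$ on $\mathcal{H}_1$ and $\{\{N^{(2)}_{b_2|y_2}\}_{b_2}\}_{y_2}$ on $\mathcal{H}_2$, the correlations $$p(a b_1 b_2|x y_1 y_2)=\mathrm{tr}\big[(M_{a|x}\otimes N^{(1)}_{b_1|y_1}\otimes N^{(2)}_{b_2|y_2})\,\tilde\rho\big]$$ admit a quantum realisation.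
   Context: A tripartite conditional distribution $p(a b_1 b_2|x y_1 y_2)$ admits a quantum realisation if there exist Hilbert spaces $\mathcal{K}_A,\mathcal{K}_1,\mathcal{K}_2$, a density operator $\omega$ on $\mathcal{K}_A\otimes\mathcal{K}_1\otimes\mathcal{K}_2$, and POVMs $\{E_{a|x}\}$, $\{F_{b_1|y_1}\}$, $\{G_{b_2|y_2}\}$ on the respective spaces with $p(ab_1b_2|xy_1y_2)=\mathrm{tr}[(E_{a|x}\otimes F_{b_1|y_1}\otimes G_{b_2|y_2})\omega]$. (In the paper, $\tilde\rho$ is interpreted as a state of the toy theory "Witworld", in which states are operators that are positive on product effects, and the correlations above are those obtained when the parties measure such a state.) *)

theory Defs
  imports Complex_Main "Jordan_Normal_Form.Matrix"
begin

definition mtrace :: "complex mat \<Rightarrow> complex" where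
  "mtrace A = (\<Sum>i<dim_row A. A $$ (i, i))"

definition kron :: "complex mat \<Rightarrow> complex mat \<Rightarrow> complex mat" where
  "kron A B = mat (dim_row A * dim_row B) (dim_col A * dim_col B)
     (\<lambda>(i, j). A $$ (i div dim_row B, j div dim_col B) * B $$ (i mod dim_row B, j mod dim_col B))"

definition munit :: "nat \<Rightarrow> nat \<Rightarrow> nat \<Rightarrow> complex mat" where
  "munit d i j = mat d d (\<lambda>(k, l). if k = i \<and> l = j then 1 else 0)"

definition psd :: "nat \<Rightarrow> complex mat \<Rightarrow> bool" where
  "psd d A \<longleftrightarrow> A \<in> carrier_mat d d \<and>
     (\<forall>v :: nat \<Rightarrow> complex.
        let q = (\<Sum>i<d. \<Sum>j<d. cnj (v i) * A $$ (i, j) * v j) in Im q = 0 \<and> Re q \<ge> 0)"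

definition density_op :: "nat \<Rightarrow> complex mat \<Rightarrow> bool" where
  "density_op d \<rho> \<longleftrightarrow> psd d \<rho> \<and> mtrace \<rho> = 1"

definition povm :: "nat \<Rightarrow> ('a::finite \<Rightarrow> complex mat) \<Rightarrow> bool" where
  "povm d E \<longleftrightarrow> (\<forall>a. psd d (E a)) \<and>
     (\<forall>i<d. \<forall>j<d. (\<Sum>a\<in>UNIV. E a $$ (i, j)) = (if i = j then 1 else 0))"

definition linear_map_on :: "nat \<Rightarrow> (complex mat \<Rightarrow> complex mat) \<Rightarrow> bool" where
  "linear_map_on d L \<longleftrightarrow>
     (\<forall>A \<in> carrier_mat d d. L A \<in> carrier_mat d d) \<and>
     (\<forall>A \<in> carrier_mat d d. \<forall>B \<in> carrier_mat d d. L (A + B) = L A + L B) \<and>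
     (\<forall>c. \<forall>A \<in> carrier_mat d d. L (c \<cdot>\<^sub>m A) = c \<cdot>\<^sub>m L A)"

definition positive_map :: "nat \<Rightarrow> (complex mat \<Rightarrow> complex mat) \<Rightarrow> bool" where
  "positive_map d L \<longleftrightarrow> (\<forall>A. psd d A \<longrightarrow> psd d (L A))"

definition trace_preserving :: "nat \<Rightarrow> (complex mat \<Rightarrow> complex mat) \<Rightarrow> bool" where
  "trace_preserving d L \<longleftrightarrow> (\<forall>A \<in> carrier_mat d d. mtrace (L A) = mtrace A)"

text \<open>(id_A (x) L1 (x) L2)[rho] on C^dA \<otimes> C^d1 \<otimes> C^d2 (index order A,1,2,
  i.e. matrix index iA*(d1*d2) + i1*d2 + i2), defined as the linear extension
  from product matrix units.\<close>
definition apply_id_maps ::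
  "nat \<Rightarrow> nat \<Rightarrow> nat \<Rightarrow> (complex mat \<Rightarrow> complex mat) \<Rightarrow> (complex mat \<Rightarrow> complex mat)
     \<Rightarrow> complex mat \<Rightarrow> complex mat" where
  "apply_id_maps dA d1 d2 L1 L2 \<rho> =
     mat (dA * d1 * d2) (dA * d1 * d2) (\<lambda>(r, s).
       \<Sum>iA<dA. \<Sum>jA<dA. \<Sum>i1<d1. \<Sum>j1<d1. \<Sum>i2<d2. \<Sum>j2<d2.
         \<rho> $$ (iA * (d1 * d2) + i1 * d2 + i2, jA * (d1 * d2) + j1 * d2 + j2) *
         kron (kron (munit dA iA jA) (L1 (munit d1 i1 j1))) (L2 (munit d2 i2 j2)) $$ (r, s))"

definition quantum_realisable ::
  "('a::finite \<Rightarrow> 'b1::finite \<Rightarrow> 'b2::finite \<Rightarrow> 'x::finite \<Rightarrow> 'y1::finite \<Rightarrow> 'y2::finite \<Rightarrow> complex)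
     \<Rightarrow> bool" where
  "quantum_realisable p \<longleftrightarrow>
     (\<exists>nA n1 n2 \<omega> (E :: 'x \<Rightarrow> 'a \<Rightarrow> complex mat) (F :: 'y1 \<Rightarrow> 'b1 \<Rightarrow> complex mat)
          (G :: 'y2 \<Rightarrow> 'b2 \<Rightarrow> complex mat).
        density_op (nA * n1 * n2) \<omega> \<and>
        (\<forall>x. povm nA (E x)) \<and> (\<forall>y1. povm n1 (F y1)) \<and> (\<forall>y2. povm n2 (G y2)) \<and>
        (\<forall>a b1 b2 x y1 y2.
           p a b1 b2 x y1 y2 = mtrace (kron (kron (E x a) (F y1 b1)) (G y2 b2) * \<omega>)))"

end

theory Submission
  imports Defs "HOL-Library.Complex_Order"
begin

text \<open>The correlations are realised by the original state \<open>\<rho>\<close> together with the measurements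
  \<open>M\<close>, \<open>\<Lambda>\<^sub>1\<^sup>\<dagger> N\<^sub>1\<close> and \<open>\<Lambda>\<^sub>2\<^sup>\<dagger> N\<^sub>2\<close>, where \<open>\<Lambda>\<^sup>\<dagger>\<close> is the adjoint of \<open>\<Lambda>\<close> for the trace pairing:
  expanding \<open>(id \<otimes> \<Lambda>\<^sub>1 \<otimes> \<Lambda>\<^sub>2) \<rho>\<close> in matrix units gives
  \<open>tr ((M \<otimes> N\<^sub>1 \<otimes> N\<^sub>2) (id \<otimes> \<Lambda>\<^sub>1 \<otimes> \<Lambda>\<^sub>2) \<rho>) = tr ((M \<otimes> \<Lambda>\<^sub>1\<^sup>\<dagger> N\<^sub>1 \<otimes> \<Lambda>\<^sub>2\<^sup>\<dagger> N\<^sub>2) \<rho>)\<close>. The last fact is proved by Gaussian elimination on one of the two factors.\<close>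

section \<open>Kronecker products and traces\<close>

lemma index_pair_less: "(i::nat) < a \<Longrightarrow> j < b \<Longrightarrow> i * b + j < a * b"
proof -
  assume "i < a" "j < b"
  then have "i * b + j < Suc i * b" by simp
  also have "\<dots> \<le> a * b" using \<open>i < a\<close> by (intro mult_le_mono1) simp
  finally show ?thesis .
qed

lemma sum_lessThan_mult:
  fixes g :: "nat \<Rightarrow> 'c::comm_monoid_add"
  shows "(\<Sum>r<a * b. g r) = (\<Sum>i<a. \<Sum>j<b. g (i * b + j))"
proof -
  have "(\<Sum>r<a * b. g r) = (\<Sum>i<a. sum g {i * b..<i * b + b})"
    using sum.nat_group[of g b a, symmetric] by (simp add: mult.commute)
  also have "\<dots> = (\<Sum>i<a. \<Sum>j<b. g (i * b + j))"
    by (simp add: sum.atLeastLessThan_shift_0 atLeast0LessThan)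
  finally show ?thesis .
qed

lemma sum_pairs_lessThan_mult:
  fixes g :: "nat \<Rightarrow> nat \<Rightarrow> 'c::comm_monoid_add"
  shows "(\<Sum>r<a * b. \<Sum>s<a * b. g r s) =
    (\<Sum>i<a. \<Sum>k<a. \<Sum>j<b. \<Sum>l<b. g (i * b + j) (k * b + l))"
  unfolding sum_lessThan_mult by (rule sum.cong[OF refl], rule sum.swap)

lemma sum_pairs_lessThan_mult3:
  fixes g :: "nat \<Rightarrow> nat \<Rightarrow> 'c::comm_monoid_add"
  shows "(\<Sum>r<a * b * c. \<Sum>s<a * b * c. g r s) =
    (\<Sum>i<a. \<Sum>i'<a. \<Sum>j<b. \<Sum>j'<b. \<Sum>k<c. \<Sum>k'<c.
       g (i * (b * c) + j * c + k) (i' * (b * c) + j' * c + k'))"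
proof -
  have "\<And>i j k. (i * b + j) * c + k = i * (b * c) + j * c + (k::nat)"
    by (simp add: algebra_simps)
  then show ?thesis
    by (simp add: sum_pairs_lessThan_mult[where a = "a * b" and b = c]
        sum_pairs_lessThan_mult[where a = a and b = b])
qed

lemma sum_mult_sum_swap:
  fixes p :: "'r \<Rightarrow> 's \<Rightarrow> 'a::semiring_0"
  shows "(\<Sum>r\<in>R. \<Sum>s\<in>S. p r s * (\<Sum>x\<in>X. g x r s)) = (\<Sum>x\<in>X. \<Sum>r\<in>R. \<Sum>s\<in>S. p r s * g x r s)"
proof -
  have "(\<Sum>r\<in>R. \<Sum>s\<in>S. p r s * (\<Sum>x\<in>X. g x r s)) = (\<Sum>r\<in>R. \<Sum>s\<in>S. \<Sum>x\<in>X. p r s * g x r s)"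
    by (simp add: sum_distrib_left)
  also have "\<dots> = (\<Sum>r\<in>R. \<Sum>x\<in>X. \<Sum>s\<in>S. p r s * g x r s)"
    by (rule sum.cong[OF refl], rule sum.swap)
  also have "\<dots> = (\<Sum>x\<in>X. \<Sum>r\<in>R. \<Sum>s\<in>S. p r s * g x r s)"
    by (rule sum.swap)
  finally show ?thesis .
qed

lemma kron_carrier:
  "A \<in> carrier_mat n n' \<Longrightarrow> B \<in> carrier_mat m m' \<Longrightarrow> kron A B \<in> carrier_mat (n * m) (n' * m')"
  by (simp add: kron_def)

lemma index_kron:
  assumes "A \<in> carrier_mat n n'" "B \<in> carrier_mat m m'" "i < n" "j < m" "k < n'" "l < m'"
  shows "kron A B $$ (i * m + j, k * m' + l) = A $$ (i, k) * B $$ (j, l)"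
  using assms by (simp add: kron_def index_pair_less)

lemma index_kron3:
  assumes "A \<in> carrier_mat a a" "B \<in> carrier_mat b b" "C \<in> carrier_mat c c"
    and "i1 < a" "i2 < b" "i3 < c" "j1 < a" "j2 < b" "j3 < c"
  shows "kron (kron A B) C $$ (i1 * (b * c) + i2 * c + i3, j1 * (b * c) + j2 * c + j3) =
    A $$ (i1, j1) * B $$ (i2, j2) * C $$ (i3, j3)"
proof -
  have "i1 * (b * c) + i2 * c + i3 = (i1 * b + i2) * c + i3"
    "j1 * (b * c) + j2 * c + j3 = (j1 * b + j2) * c + j3"
    by (simp_all add: algebra_simps)
  then show ?thesis
    using assms
    by (simp add: index_kron[of "kron A B" "a * b" "a * b"] kron_carrier index_pair_less index_kron)
qed

lemma mtrace_mult:
  "A \<in> carrier_mat n m \<Longrightarrow> B \<in> carrier_mat m n \<Longrightarrow>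
    mtrace (A * B) = (\<Sum>i<n. \<Sum>j<m. A $$ (i, j) * B $$ (j, i))"
  by (simp add: mtrace_def scalar_prod_def atLeast0LessThan)

lemma mtrace_mult_smult:
  "A \<in> carrier_mat n m \<Longrightarrow> B \<in> carrier_mat m n \<Longrightarrow> mtrace (A * (c \<cdot>\<^sub>m B)) = c * mtrace (A * B)"
  by (simp add: mtrace_mult sum_distrib_left mult_ac)

lemma mtrace_mult_commute:
  assumes "A \<in> carrier_mat n m" "B \<in> carrier_mat m n"
  shows "mtrace (A * B) = mtrace (B * A)"
proof -
  have "mtrace (A * B) = (\<Sum>i<n. \<Sum>j<m. B $$ (j, i) * A $$ (i, j))"
    using assms by (simp add: mtrace_mult mult.commute)
  also have "\<dots> = (\<Sum>j<m. \<Sum>i<n. B $$ (j, i) * A $$ (i, j))"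
    by (rule sum.swap)
  also have "\<dots> = mtrace (B * A)"
    using assms by (simp add: mtrace_mult)
  finally show ?thesis .
qed

lemma mtrace_kron_mult:
  assumes "A \<in> carrier_mat n n" "C \<in> carrier_mat n n" "B \<in> carrier_mat m m" "D \<in> carrier_mat m m"
  shows "mtrace (kron A B * kron C D) = mtrace (A * C) * mtrace (B * D)"
proof -
  have "mtrace (kron A B * kron C D) =
      (\<Sum>r<n * m. \<Sum>s<n * m. kron A B $$ (r, s) * kron C D $$ (s, r))"
    by (rule mtrace_mult[OF kron_carrier[OF assms(1,3)] kron_carrier[OF assms(2,4)]])
  also have "\<dots> = (\<Sum>i<n. \<Sum>k<n. \<Sum>j<m. \<Sum>l<m.
      kron A B $$ (i * m + j, k * m + l) * kron C D $$ (k * m + l, i * m + j))"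
    by (rule sum_pairs_lessThan_mult)
  also have "\<dots> = (\<Sum>i<n. \<Sum>k<n. \<Sum>j<m. \<Sum>l<m.
      (A $$ (i, k) * C $$ (k, i)) * (B $$ (j, l) * D $$ (l, j)))"
    using assms by (intro sum.cong refl) (simp add: index_kron mult_ac)
  also have "\<dots> = mtrace (A * C) * mtrace (B * D)"
    unfolding mtrace_mult[OF assms(1,2)] mtrace_mult[OF assms(3,4)]
    by (simp only: sum_distrib_right, simp only: sum_distrib_left)
  finally show ?thesis .
qed

lemma mtrace_kron3_mult:
  assumes "A \<in> carrier_mat a a" "A' \<in> carrier_mat a a" "B \<in> carrier_mat b b" "B' \<in> carrier_mat b b"
    and "C \<in> carrier_mat c c" "C' \<in> carrier_mat c c"
  shows "mtrace (kron (kron A B) C * kron (kron A' B') C') =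
    mtrace (A * A') * mtrace (B * B') * mtrace (C * C')"
  using assms by (simp add: mtrace_kron_mult[of _ "a * b" _ _ c] kron_carrier mtrace_kron_mult)

lemma munit_carrier [simp]: "munit d i j \<in> carrier_mat d d"
  by (simp add: munit_def)

lemma munit_dim [simp]: "dim_row (munit d i j) = d" "dim_col (munit d i j) = d"
  by (simp_all add: munit_def)

lemma index_munit [simp]:
  "a < d \<Longrightarrow> b < d \<Longrightarrow> munit d i j $$ (a, b) = (if a = i \<and> b = j then 1 else 0)"
  by (simp add: munit_def)

lemma mtrace_munit: "i < d \<Longrightarrow> mtrace (munit d i j) = (if i = j then 1 else 0)"
  by (cases "i = j") (auto simp: mtrace_def munit_def intro!: sum.neutral)

lemma mtrace_mult_munit:
  assumes "A \<in> carrier_mat d d" "i < d" "j < d"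
  shows "mtrace (A * munit d i j) = A $$ (j, i)"
proof -
  have "mtrace (A * munit d i j) = (\<Sum>r<d. \<Sum>s<d. A $$ (r, s) * (if s = i \<and> r = j then 1 else 0))"
    using assms by (simp add: mtrace_mult)
  also have "\<dots> = (\<Sum>r<d. \<Sum>s<d. if s = i then (if r = j then A $$ (r, s) else 0) else 0)"
    by (intro sum.cong refl) auto
  also have "\<dots> = A $$ (j, i)"
    using assms by (simp add: sum.delta)
  finally show ?thesis .
qed

section \<open>Positive semidefinite matrices\<close>

definition quad_form :: "nat \<Rightarrow> complex mat \<Rightarrow> (nat \<Rightarrow> complex) \<Rightarrow> complex" where
  "quad_form d A v = (\<Sum>i<d. \<Sum>j<d. cnj (v i) * A $$ (i, j) * v j)"

lemma psd_iff_quad_form: "psd d A \<longleftrightarrow> A \<in> carrier_mat d d \<and> (\<forall>v. 0 \<le> quad_form d A v)"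
  unfolding psd_def quad_form_def Let_def less_eq_complex_def by auto

lemma psd_carrier: "psd d A \<Longrightarrow> A \<in> carrier_mat d d"
  by (simp add: psd_def)

lemma quad_form_supported:
  assumes "S \<subseteq> {..<d}" and "\<And>k. k \<notin> S \<Longrightarrow> v k = 0"
  shows "quad_form d A v = (\<Sum>i\<in>S. \<Sum>j\<in>S. cnj (v i) * A $$ (i, j) * v j)"
proof -
  have "(\<Sum>j<d. cnj (v i) * A $$ (i, j) * v j) = (\<Sum>j\<in>S. cnj (v i) * A $$ (i, j) * v j)" for i
    using assms by (intro sum.mono_neutral_right) auto
  then have "quad_form d A v = (\<Sum>i<d. \<Sum>j\<in>S. cnj (v i) * A $$ (i, j) * v j)"
    by (simp add: quad_form_def)
  also have "\<dots> = (\<Sum>i\<in>S. \<Sum>j\<in>S. cnj (v i) * A $$ (i, j) * v j)"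
    using assms by (intro sum.mono_neutral_right) auto
  finally show ?thesis .
qed

lemma quad_form_single:
  "i < d \<Longrightarrow> quad_form d A (\<lambda>k. if k = i then x else 0) = cnj x * A $$ (i, i) * x"
  by (subst quad_form_supported[of "{i}"]) auto

lemma quad_form_pair:
  assumes "i < d" "j < d" "i \<noteq> j"
  shows "quad_form d A (\<lambda>k. if k = i then x else if k = j then y else 0) =
    cnj x * A $$ (i, i) * x + cnj x * A $$ (i, j) * y +
    cnj y * A $$ (j, i) * x + cnj y * A $$ (j, j) * y"
  using assms by (subst quad_form_supported[of "{i, j}"]) auto

lemma psd_diag_nonneg:
  assumes "psd d A" "i < d"
  shows "0 \<le> A $$ (i, i)"
proof -
  have "0 \<le> quad_form d A (\<lambda>k. if k = i then 1 else 0)"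
    using assms(1) psd_iff_quad_form by blast
  then show ?thesis
    by (simp add: quad_form_single[OF assms(2)])
qed

lemma psd_hermitian:
  assumes A: "psd d A" and "i < d" "j < d"
  shows "A $$ (j, i) = cnj (A $$ (i, j))"
proof (cases "i = j")
  case True
  then show ?thesis
    using psd_diag_nonneg[OF A \<open>i < d\<close>] by (simp add: less_eq_complex_def complex_eq_iff)
next
  case False
  have "0 \<le> quad_form d A (\<lambda>k. if k = i then 1 else if k = j then 1 else 0)"
    and "0 \<le> quad_form d A (\<lambda>k. if k = i then 1 else if k = j then \<i> else 0)"
    using A psd_iff_quad_form by blast+
  moreover have "Im (A $$ (i, i)) = 0" "Im (A $$ (j, j)) = 0"
    using psd_diag_nonneg[OF A] assms by (simp_all add: less_eq_complex_def)
  ultimately show ?thesis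
    using assms by (simp add: quad_form_pair False less_eq_complex_def complex_eq_iff)
qed

lemma complex_divide_nonneg: "0 \<le> (z::complex) \<Longrightarrow> 0 \<le> w \<Longrightarrow> 0 \<le> z / w"
  by (auto simp: less_eq_complex_def Re_divide Im_divide power2_eq_square
      intro!: divide_nonneg_nonneg)

text \<open>A nonzero entry \<open>c = A$$(m, j)\<close> next to a vanishing diagonal entry would make the form
  negative at \<open>-t c e\<^sub>m + e\<^sub>j\<close> for large real \<open>t\<close>.\<close>
lemma psd_zero_diag_imp_zero_row:
  assumes A: "psd d A" and m: "m < d" and j: "j < d" and zero: "A $$ (m, m) = 0"
  shows "A $$ (m, j) = 0"
proof (rule ccontr)
  define c where "c = A $$ (m, j)"
  assume "A $$ (m, j) \<noteq> 0"
  then have "c \<noteq> 0" by (simp add: c_def)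
  with zero have "m \<noteq> j" by (auto simp: c_def)
  define s where "s = (Re c)\<^sup>2 + (Im c)\<^sup>2"
  have "s > 0"
    using \<open>c \<noteq> 0\<close> by (simp add: s_def complex_eq_iff sum_power2_gt_zero_iff)
  define t where "t = (Re (A $$ (j, j)) + 1) / (2 * s)"
  define v where "v = (\<lambda>k. if k = m then - c * complex_of_real t else if k = j then 1 else 0)"
  have "A $$ (j, m) = cnj c"
    using psd_hermitian[OF A m j] by (simp add: c_def)
  then have "Re (quad_form d A v) = Re (A $$ (j, j)) - 2 * t * s"
    unfolding v_def quad_form_pair[OF m j \<open>m \<noteq> j\<close>] zero c_def[symmetric] s_def
    by (simp add: algebra_simps power2_eq_square)
  also have "\<dots> = -1"
    using \<open>s > 0\<close> by (simp add: t_def field_simps)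
  finally have "Re (quad_form d A v) < 0" by simp
  moreover have "0 \<le> quad_form d A v"
    using A psd_iff_quad_form by blast
  ultimately show False
    by (simp add: less_eq_complex_def)
qed

text \<open>One step of Gaussian elimination with pivot \<open>Q$$(m, m)\<close>, kept as a \<open>d \<times> d\<close> matrix whose
  \<open>m\<close>-th row and column vanish.\<close>
definition schur_complement :: "nat \<Rightarrow> complex mat \<Rightarrow> nat \<Rightarrow> complex mat" where
  "schur_complement d Q m =
    mat d d (\<lambda>(i, j). Q $$ (i, j) - Q $$ (i, m) * Q $$ (m, j) / Q $$ (m, m))"

lemma quad_form_sub_unit_vector:
  assumes m: "m < d"
  shows "quad_form d Q (\<lambda>i. v i - (if i = m then s else 0)) =
    quad_form d Q v - s * (\<Sum>i<d. cnj (v i) * Q $$ (i, m)) - cnj s * (\<Sum>j<d. Q $$ (m, j) * v j)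
      + cnj s * Q $$ (m, m) * s"
proof -
  have delta: "(\<Sum>k<d. f k * (if k = m then x else 0)) = f m * x" for f :: "nat \<Rightarrow> complex" and x
  proof -
    have "(\<Sum>k<d. f k * (if k = m then x else 0)) = (\<Sum>k<d. if k = m then f k * x else 0)"
      by (intro sum.cong) auto
    then show ?thesis
      using m by simp
  qed
  have "quad_form d Q (\<lambda>i. v i - (if i = m then s else 0)) =
      (\<Sum>i<d. \<Sum>j<d. cnj (v i) * Q $$ (i, j) * v j
         - (cnj (v i) * Q $$ (i, j)) * (if j = m then s else 0)
         - (Q $$ (i, j) * v j) * (if i = m then cnj s else 0)
         + (Q $$ (i, j) * (if j = m then s else 0)) * (if i = m then cnj s else 0))"
    unfolding quad_form_def by (intro sum.cong refl) (auto simp: algebra_simps)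
  also have "\<dots> = quad_form d Q v
      - (\<Sum>i<d. \<Sum>j<d. (cnj (v i) * Q $$ (i, j)) * (if j = m then s else 0))
      - (\<Sum>i<d. (\<Sum>j<d. Q $$ (i, j) * v j) * (if i = m then cnj s else 0))
      + (\<Sum>i<d. (\<Sum>j<d. Q $$ (i, j) * (if j = m then s else 0)) * (if i = m then cnj s else 0))"
    unfolding quad_form_def by (simp add: sum.distrib sum_subtractf sum_distrib_right)
  also have "\<dots> = quad_form d Q v - s * (\<Sum>i<d. cnj (v i) * Q $$ (i, m))
      - cnj s * (\<Sum>j<d. Q $$ (m, j) * v j) + cnj s * Q $$ (m, m) * s"
    by (simp only: delta, simp add: sum_distrib_left mult_ac)
  finally show ?thesis .
qed

lemma quad_form_schur_complement:
  assumes m: "m < d" and pivot: "Q $$ (m, m) \<noteq> 0"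
  shows "quad_form d (schur_complement d Q m) v =
    quad_form d Q (\<lambda>i. v i - (if i = m then (\<Sum>j<d. Q $$ (m, j) * v j) / Q $$ (m, m) else 0))"
proof -
  define a where "a = Q $$ (m, m)"
  define c where "c = (\<Sum>j<d. Q $$ (m, j) * v j)"
  define r where "r = (\<Sum>i<d. cnj (v i) * Q $$ (i, m))"
  have "quad_form d (schur_complement d Q m) v =
      (\<Sum>i<d. \<Sum>j<d.
        cnj (v i) * Q $$ (i, j) * v j - (cnj (v i) * Q $$ (i, m)) * (Q $$ (m, j) * v j) / a)"
    unfolding quad_form_def schur_complement_def a_def
    by (intro sum.cong refl) (simp add: algebra_simps diff_divide_distrib)
  also have "\<dots> = quad_form d Q v - r * c / a"
    unfolding quad_form_def r_def c_def
    by (simp add: sum_subtractf sum_divide_distrib[symmetric] sum_distrib_left[symmetric]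
        sum_distrib_right[symmetric])
  also have "\<dots> = quad_form d Q (\<lambda>i. v i - (if i = m then c / a else 0))"
  proof -
    have "quad_form d Q (\<lambda>i. v i - (if i = m then c / a else 0)) =
        quad_form d Q v - c / a * r - cnj (c / a) * c + cnj (c / a) * a * (c / a)"
      by (rule quad_form_sub_unit_vector[OF m, of Q v "c / a", folded r_def c_def a_def])
    also have "\<dots> = quad_form d Q v - r * c / a"
      using pivot by (simp add: a_def field_simps)
    finally show ?thesis by simp
  qed
  finally show ?thesis
    by (simp only: a_def c_def)
qed

lemma psd_schur_complement:
  assumes "psd d Q" "m < d" "Q $$ (m, m) \<noteq> 0"
  shows "psd d (schur_complement d Q m)"
proof -
  have "0 \<le> quad_form d (schur_complement d Q m) v" for v
    using assms by (simp add: quad_form_schur_complement psd_iff_quad_form)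
  then show ?thesis
    by (simp add: psd_iff_quad_form schur_complement_def)
qed

lemma mtrace_mult_schur_complement:
  assumes Q: "psd d Q" and N: "N \<in> carrier_mat d d" and m: "m < d" and pivot: "Q $$ (m, m) \<noteq> 0"
  shows "mtrace (N * Q) =
    mtrace (N * schur_complement d Q m) + quad_form d N (\<lambda>j. Q $$ (j, m)) / Q $$ (m, m)"
proof -
  have "quad_form d N (\<lambda>j. Q $$ (j, m)) / Q $$ (m, m) =
      (\<Sum>i<d. \<Sum>j<d. N $$ (i, j) * (Q $$ (j, m) * Q $$ (m, i) / Q $$ (m, m)))"
    unfolding quad_form_def using psd_hermitian[OF Q m]
    by (simp add: sum_divide_distrib mult_ac)
  then show ?thesis
    using N psd_carrier[OF Q]
    by (simp add: mtrace_mult schur_complement_def sum.distrib[symmetric] algebra_simps)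
qed

text \<open>Induction on the number of rows and columns of \<open>Q\<close> not yet cleared: each elimination step
  splits off \<open>q q\<^sup>* / Q$$(m, m)\<close>, whose trace against \<open>N\<close> is the value of the quadratic form of
  \<open>N\<close> at \<open>q\<close>.\<close>
lemma mtrace_mult_psd_nonneg_aux:
  assumes "psd d N" "psd d Q" "\<forall>i<d. \<forall>j<d. (i < m \<or> j < m) \<longrightarrow> Q $$ (i, j) = 0"
  shows "0 \<le> mtrace (N * Q)"
  using assms
proof (induction "d - m" arbitrary: m Q)
  case 0
  then have "\<forall>i<d. \<forall>j<d. Q $$ (j, i) = 0" by auto
  then show ?case
    using psd_carrier[OF "0.prems"(1)] psd_carrier[OF "0.prems"(2)] by (simp add: mtrace_mult)
next
  case (Suc k m Q)
  note N = Suc.prems(1) and Q = Suc.prems(2) and cleared = Suc.prems(3)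
  have m: "m < d" and k: "k = d - Suc m" using Suc.hyps by auto
  show ?case
  proof (cases "Q $$ (m, m) = 0")
    case True
    have "Q $$ (m, j) = 0" "Q $$ (j, m) = 0" if "j < d" for j
      using psd_zero_diag_imp_zero_row[OF Q m that True] psd_hermitian[OF Q m that] by simp_all
    then have "\<forall>i<d. \<forall>j<d. (i < Suc m \<or> j < Suc m) \<longrightarrow> Q $$ (i, j) = 0"
      using cleared less_Suc_eq by auto
    then show ?thesis
      using Suc.hyps(1)[OF k N Q] by blast
  next
    case False
    define S where "S = schur_complement d Q m"
    have "\<forall>i<d. \<forall>j<d. (i < Suc m \<or> j < Suc m) \<longrightarrow> S $$ (i, j) = 0"
      using cleared False m by (auto simp: S_def schur_complement_def less_Suc_eq)
    then have "0 \<le> mtrace (N * S)"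
      using Suc.hyps(1)[OF k N] psd_schur_complement[OF Q m False] by (simp add: S_def)
    moreover have "0 \<le> quad_form d N (\<lambda>j. Q $$ (j, m)) / Q $$ (m, m)"
      using N psd_iff_quad_form psd_diag_nonneg[OF Q m] by (simp add: complex_divide_nonneg)
    ultimately show ?thesis
      using mtrace_mult_schur_complement[OF Q psd_carrier[OF N] m False] by (simp add: S_def)
  qed
qed

lemma mtrace_mult_psd_nonneg: "psd d N \<Longrightarrow> psd d Q \<Longrightarrow> 0 \<le> mtrace (N * Q)"
  using mtrace_mult_psd_nonneg_aux[of d N Q 0] by simp

definition outer_mat :: "nat \<Rightarrow> (nat \<Rightarrow> complex) \<Rightarrow> complex mat" where
  "outer_mat d v = mat d d (\<lambda>(i, j). v i * cnj (v j))"

lemma psd_outer_mat: "psd d (outer_mat d v)"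
  unfolding psd_iff_quad_form
proof (intro conjI allI)
  show "outer_mat d v \<in> carrier_mat d d"
    by (simp add: outer_mat_def)
  fix u
  define z where "z = (\<Sum>i<d. cnj (u i) * v i)"
  have "quad_form d (outer_mat d v) u = z * cnj z"
    by (simp add: quad_form_def outer_mat_def z_def sum_product sum_distrib_left mult_ac)
  then show "0 \<le> quad_form d (outer_mat d v) u"
    by (simp add: complex_mult_cnj less_eq_complex_def)
qed

lemma quad_form_eq_mtrace_mult_outer_mat:
  "A \<in> carrier_mat d d \<Longrightarrow> quad_form d A v = mtrace (A * outer_mat d v)"
  by (simp add: quad_form_def outer_mat_def mtrace_mult mult_ac)

section \<open>Adjoints of positive trace-preserving maps\<close>

text \<open>Matrices of all dimensions share the type \<open>complex mat\<close>, which therefore has no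
  \<open>comm_monoid_add\<close> instance; finite sums of \<open>d \<times> d\<close> matrices are formed explicitly.\<close>
fun mat_sum :: "nat \<Rightarrow> (nat \<Rightarrow> complex mat) \<Rightarrow> nat \<Rightarrow> complex mat" where
  "mat_sum d f 0 = 0\<^sub>m d d"
| "mat_sum d f (Suc n) = mat_sum d f n + f n"

lemma mat_sum_carrier:
  "(\<And>k. k < n \<Longrightarrow> f k \<in> carrier_mat d d) \<Longrightarrow> mat_sum d f n \<in> carrier_mat d d"
  by (induction n) auto

lemma index_mat_sum:
  assumes "\<And>k. k < n \<Longrightarrow> f k \<in> carrier_mat d d" "i < d" "j < d"
  shows "mat_sum d f n $$ (i, j) = (\<Sum>k<n. f k $$ (i, j))"
  using assms
proof (induction n)
  case (Suc n)
  then have "mat_sum d f n \<in> carrier_mat d d" "dim_row (f n) = d" "dim_col (f n) = d"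
    by (auto intro: mat_sum_carrier)
  with Suc show ?case by simp
qed simp

lemma mtrace_mult_mat_sum:
  assumes N: "N \<in> carrier_mat d d" and f: "\<And>k. k < n \<Longrightarrow> f k \<in> carrier_mat d d"
  shows "mtrace (N * mat_sum d f n) = (\<Sum>k<n. mtrace (N * f k))"
  using f
proof (induction n)
  case 0
  then show ?case using N by (simp add: mtrace_def)
next
  case (Suc n)
  have S: "mat_sum d f n \<in> carrier_mat d d" and F: "f n \<in> carrier_mat d d"
    using Suc.prems by (auto intro: mat_sum_carrier)
  have "mtrace (N * mat_sum d f (Suc n)) = mtrace (N * mat_sum d f n) + mtrace (N * f n)"
    using N S F by (simp add: mult_add_distrib_mat mtrace_def sum.distrib)
  then show ?case
    using Suc by simp
qed

lemma linear_map_on_zero: "linear_map_on d L \<Longrightarrow> L (0\<^sub>m d d) = 0\<^sub>m d d"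
proof -
  assume L: "linear_map_on d L"
  then have "L (0\<^sub>m d d) \<in> carrier_mat d d"
    by (simp add: linear_map_on_def)
  moreover have "L (0\<^sub>m d d) = 0 \<cdot>\<^sub>m L (0\<^sub>m d d)"
    using L unfolding linear_map_on_def by (metis smult_zero_mat zero_carrier_mat)
  moreover have "0 \<cdot>\<^sub>m L (0\<^sub>m d d) = 0\<^sub>m d d" if "L (0\<^sub>m d d) \<in> carrier_mat d d"
    using that by (intro eq_matI) auto
  ultimately show ?thesis
    by simp
qed

lemma linear_map_on_mat_sum:
  assumes L: "linear_map_on d L" and f: "\<And>k. k < n \<Longrightarrow> f k \<in> carrier_mat d d"
  shows "L (mat_sum d f n) = mat_sum d (\<lambda>k. L (f k)) n"
  using f
proof (induction n)
  case 0
  then show ?case using linear_map_on_zero[OF L] by simp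
next
  case (Suc n)
  then have "mat_sum d f n \<in> carrier_mat d d" "f n \<in> carrier_mat d d"
    by (auto intro: mat_sum_carrier)
  with Suc L show ?case
    by (simp add: linear_map_on_def)
qed

lemma mat_sum_munit_expansion:
  assumes A: "A \<in> carrier_mat d d"
  shows "A = mat_sum d (\<lambda>r. A $$ (r div d, r mod d) \<cdot>\<^sub>m munit d (r div d) (r mod d)) (d * d)"
    (is "A = ?S")
proof -
  have S: "?S \<in> carrier_mat d d"
    by (intro mat_sum_carrier) simp
  have "?S $$ (a, b) = A $$ (a, b)" if ab: "a < d" "b < d" for a b
  proof -
    have "?S $$ (a, b) =
        (\<Sum>r<d * d. A $$ (r div d, r mod d) * (if a = r div d \<and> b = r mod d then 1 else 0))"
      using ab by (simp add: index_mat_sum)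
    also have "\<dots> = (\<Sum>i<d. \<Sum>j<d. if j = b then (if i = a then A $$ (i, j) else 0) else 0)"
      unfolding sum_lessThan_mult by (intro sum.cong refl) auto
    also have "\<dots> = A $$ (a, b)"
      using ab by (simp add: sum.delta)
    finally show ?thesis .
  qed
  with A S show ?thesis
    by (intro eq_matI) auto
qed

text \<open>The adjoint (Heisenberg-picture) map \<open>L\<^sup>\<dagger>\<close> applied to \<open>N\<close>, with respect to the pairing
  \<open>(N, A) \<mapsto> tr (N A)\<close>.\<close>
definition dual_map :: "nat \<Rightarrow> (complex mat \<Rightarrow> complex mat) \<Rightarrow> complex mat \<Rightarrow> complex mat" where
  "dual_map d L N = mat d d (\<lambda>(j, i). mtrace (N * L (munit d i j)))"

lemma dual_map_carrier: "dual_map d L N \<in> carrier_mat d d"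
  by (simp add: dual_map_def)

lemma mtrace_mult_dual_map:
  assumes L: "linear_map_on d L" and N: "N \<in> carrier_mat d d" and A: "A \<in> carrier_mat d d"
  shows "mtrace (dual_map d L N * A) = mtrace (N * L A)"
proof -
  define E where "E r = munit d (r div d) (r mod d)" for r
  define c where "c r = A $$ (r div d, r mod d)" for r
  have LE: "L (E r) \<in> carrier_mat d d" for r
    using L by (simp add: linear_map_on_def E_def)
  have "L A = L (mat_sum d (\<lambda>r. c r \<cdot>\<^sub>m E r) (d * d))"
    using mat_sum_munit_expansion[OF A] by (simp add: c_def E_def)
  also have "\<dots> = mat_sum d (\<lambda>r. c r \<cdot>\<^sub>m L (E r)) (d * d)"
    using L by (simp add: linear_map_on_mat_sum linear_map_on_def E_def)
  finally have "mtrace (N * L A) = (\<Sum>r<d * d. c r * mtrace (N * L (E r)))"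
    using N LE by (simp add: mtrace_mult_mat_sum mtrace_mult_smult)
  also have "\<dots> = (\<Sum>i<d. \<Sum>j<d. dual_map d L N $$ (j, i) * A $$ (i, j))"
    unfolding sum_lessThan_mult by (intro sum.cong refl) (simp add: c_def E_def dual_map_def)
  also have "\<dots> = (\<Sum>j<d. \<Sum>i<d. dual_map d L N $$ (j, i) * A $$ (i, j))"
    by (rule sum.swap)
  also have "\<dots> = mtrace (dual_map d L N * A)"
    by (simp add: mtrace_mult[OF dual_map_carrier A])
  finally show ?thesis ..
qed

lemma psd_dual_map:
  assumes L: "linear_map_on d L" "positive_map d L" and N: "psd d N"
  shows "psd d (dual_map d L N)"
proof -
  have "quad_form d (dual_map d L N) v = mtrace (N * L (outer_mat d v))" for v
    using L N psd_outer_mat[of d v]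
    by (simp add: quad_form_eq_mtrace_mult_outer_mat dual_map_carrier mtrace_mult_dual_map
        psd_carrier)
  moreover have "0 \<le> mtrace (N * L (outer_mat d v))" for v
    using L N psd_outer_mat by (simp add: positive_map_def mtrace_mult_psd_nonneg)
  ultimately show ?thesis
    by (simp add: psd_iff_quad_form dual_map_carrier)
qed

lemma povm_carrier: "povm d N \<Longrightarrow> N b \<in> carrier_mat d d"
  by (simp add: povm_def psd_def)

lemma povm_sum_mtrace_mult:
  assumes N: "povm d N" and X: "X \<in> carrier_mat d d"
  shows "(\<Sum>b\<in>UNIV. mtrace (N b * X)) = mtrace X"
proof -
  have "(\<Sum>b\<in>UNIV. mtrace (N b * X)) = (\<Sum>b\<in>UNIV. \<Sum>r<d. \<Sum>s<d. N b $$ (r, s) * X $$ (s, r))"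
    using mtrace_mult[OF povm_carrier[OF N] X] by simp
  also have "\<dots> = (\<Sum>r<d. \<Sum>b\<in>UNIV. \<Sum>s<d. N b $$ (r, s) * X $$ (s, r))"
    by (rule sum.swap)
  also have "\<dots> = (\<Sum>r<d. \<Sum>s<d. \<Sum>b\<in>UNIV. N b $$ (r, s) * X $$ (s, r))"
    by (rule sum.cong[OF refl], rule sum.swap)
  also have "\<dots> = (\<Sum>r<d. \<Sum>s<d. (\<Sum>b\<in>UNIV. N b $$ (r, s)) * X $$ (s, r))"
    by (simp add: sum_distrib_right)
  also have "\<dots> = (\<Sum>r<d. \<Sum>s<d. if r = s then X $$ (s, r) else 0)"
    using N by (intro sum.cong refl) (simp add: povm_def)
  also have "\<dots> = mtrace X"
    using X by (simp add: mtrace_def)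
  finally show ?thesis .
qed

lemma povm_dual_map:
  assumes L: "linear_map_on d L" "positive_map d L" "trace_preserving d L" and N: "povm d N"
  shows "povm d (\<lambda>b. dual_map d L (N b))"
  unfolding povm_def
proof (intro conjI allI impI)
  show "psd d (dual_map d L (N b))" for b
    using psd_dual_map[OF L(1,2)] N by (simp add: povm_def)
  fix i j
  assume ij: "i < d" "j < d"
  have "(\<Sum>b\<in>UNIV. dual_map d L (N b) $$ (i, j)) = (\<Sum>b\<in>UNIV. mtrace (N b * L (munit d j i)))"
    using ij by (simp add: dual_map_def)
  also have "\<dots> = mtrace (munit d j i)"
    using L N ij by (simp add: povm_sum_mtrace_mult linear_map_on_def trace_preserving_def)
  also have "\<dots> = (if i = j then 1 else 0)"
    using ij by (auto simp: mtrace_munit)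
  finally show "(\<Sum>b\<in>UNIV. dual_map d L (N b) $$ (i, j)) = (if i = j then 1 else 0)" .
qed

section \<open>Moving the maps onto the measurements\<close>

lemma mtrace_kron3_mult_munit:
  assumes A: "A \<in> carrier_mat dA dA"
    and B1: "B1 \<in> carrier_mat d1 d1" and B2: "B2 \<in> carrier_mat d2 d2"
    and L1: "\<And>X. X \<in> carrier_mat d1 d1 \<Longrightarrow> L1 X \<in> carrier_mat d1 d1"
    and L2: "\<And>X. X \<in> carrier_mat d2 d2 \<Longrightarrow> L2 X \<in> carrier_mat d2 d2"
    and "iA < dA" "jA < dA" "i1 < d1" "j1 < d1" "i2 < d2" "j2 < d2"
  shows "mtrace (kron (kron A B1) B2 *
      kron (kron (munit dA iA jA) (L1 (munit d1 i1 j1))) (L2 (munit d2 i2 j2))) =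
    A $$ (jA, iA) * dual_map d1 L1 B1 $$ (j1, i1) * dual_map d2 L2 B2 $$ (j2, i2)"
proof -
  have "mtrace (kron (kron A B1) B2 *
      kron (kron (munit dA iA jA) (L1 (munit d1 i1 j1))) (L2 (munit d2 i2 j2))) =
      mtrace (A * munit dA iA jA) * mtrace (B1 * L1 (munit d1 i1 j1)) *
      mtrace (B2 * L2 (munit d2 i2 j2))"
    by (rule mtrace_kron3_mult[OF A _ B1 L1 B2 L2]) simp_all
  then show ?thesis
    using assms by (simp add: mtrace_mult_munit dual_map_def)
qed

lemma mtrace_mult_apply_id_maps:
  assumes P: "P \<in> carrier_mat (dA * d1 * d2) (dA * d1 * d2)"
    and L1: "\<And>X. X \<in> carrier_mat d1 d1 \<Longrightarrow> L1 X \<in> carrier_mat d1 d1"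
    and L2: "\<And>X. X \<in> carrier_mat d2 d2 \<Longrightarrow> L2 X \<in> carrier_mat d2 d2"
  shows "mtrace (P * apply_id_maps dA d1 d2 L1 L2 \<rho>) =
    (\<Sum>iA<dA. \<Sum>jA<dA. \<Sum>i1<d1. \<Sum>j1<d1. \<Sum>i2<d2. \<Sum>j2<d2.
      \<rho> $$ (iA * (d1 * d2) + i1 * d2 + i2, jA * (d1 * d2) + j1 * d2 + j2) *
      mtrace (P * kron (kron (munit dA iA jA) (L1 (munit d1 i1 j1))) (L2 (munit d2 i2 j2))))"
proof -
  define n where "n = dA * d1 * d2"
  define I where "I iA i1 i2 = iA * (d1 * d2) + i1 * d2 + i2" for iA i1 i2
  define K where "K iA jA i1 j1 i2 j2 =
    kron (kron (munit dA iA jA) (L1 (munit d1 i1 j1))) (L2 (munit d2 i2 j2))" for iA jA i1 j1 i2 j2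
  have K_carrier: "K iA jA i1 j1 i2 j2 \<in> carrier_mat n n" for iA jA i1 j1 i2 j2
    using L1 L2 by (simp add: K_def n_def kron_carrier)
  have "apply_id_maps dA d1 d2 L1 L2 \<rho> = mat n n (\<lambda>(r, s).
      \<Sum>iA<dA. \<Sum>jA<dA. \<Sum>i1<d1. \<Sum>j1<d1. \<Sum>i2<d2. \<Sum>j2<d2.
        \<rho> $$ (I iA i1 i2, I jA j1 j2) * K iA jA i1 j1 i2 j2 $$ (r, s))"
    by (simp add: apply_id_maps_def n_def I_def K_def)
  then have "mtrace (P * apply_id_maps dA d1 d2 L1 L2 \<rho>) = (\<Sum>r<n. \<Sum>s<n. P $$ (r, s) *
      (\<Sum>iA<dA. \<Sum>jA<dA. \<Sum>i1<d1. \<Sum>j1<d1. \<Sum>i2<d2. \<Sum>j2<d2.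
        \<rho> $$ (I iA i1 i2, I jA j1 j2) * K iA jA i1 j1 i2 j2 $$ (s, r)))"
    using P by (simp add: mtrace_mult n_def)
  also have "\<dots> = (\<Sum>iA<dA. \<Sum>jA<dA. \<Sum>i1<d1. \<Sum>j1<d1. \<Sum>i2<d2. \<Sum>j2<d2. \<Sum>r<n. \<Sum>s<n.
      P $$ (r, s) * (\<rho> $$ (I iA i1 i2, I jA j1 j2) * K iA jA i1 j1 i2 j2 $$ (s, r)))"
    by (simp only: sum_mult_sum_swap)
  also have "\<dots> = (\<Sum>iA<dA. \<Sum>jA<dA. \<Sum>i1<d1. \<Sum>j1<d1. \<Sum>i2<d2. \<Sum>j2<d2.
      \<rho> $$ (I iA i1 i2, I jA j1 j2) * mtrace (P * K iA jA i1 j1 i2 j2))"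
    using P by (intro sum.cong refl)
      (simp add: mtrace_mult[OF _ K_carrier] n_def sum_distrib_left mult_ac)
  finally show ?thesis
    by (simp only: I_def K_def)
qed

lemma mtrace_kron_mult_apply_id_maps:
  assumes A: "A \<in> carrier_mat dA dA"
    and B1: "B1 \<in> carrier_mat d1 d1" and B2: "B2 \<in> carrier_mat d2 d2"
    and \<rho>: "\<rho> \<in> carrier_mat (dA * d1 * d2) (dA * d1 * d2)"
    and L1: "\<And>X. X \<in> carrier_mat d1 d1 \<Longrightarrow> L1 X \<in> carrier_mat d1 d1"
    and L2: "\<And>X. X \<in> carrier_mat d2 d2 \<Longrightarrow> L2 X \<in> carrier_mat d2 d2"
  shows "mtrace (kron (kron A B1) B2 * apply_id_maps dA d1 d2 L1 L2 \<rho>) =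
    mtrace (kron (kron A (dual_map d1 L1 B1)) (dual_map d2 L2 B2) * \<rho>)"
proof -
  define X where "X = kron (kron A (dual_map d1 L1 B1)) (dual_map d2 L2 B2)"
  have X_carrier: "X \<in> carrier_mat (dA * d1 * d2) (dA * d1 * d2)"
    using A by (simp add: X_def kron_carrier dual_map_carrier)
  have "mtrace (kron (kron A B1) B2 * apply_id_maps dA d1 d2 L1 L2 \<rho>) =
      (\<Sum>iA<dA. \<Sum>jA<dA. \<Sum>i1<d1. \<Sum>j1<d1. \<Sum>i2<d2. \<Sum>j2<d2.
        \<rho> $$ (iA * (d1 * d2) + i1 * d2 + i2, jA * (d1 * d2) + j1 * d2 + j2) *
        mtrace (kron (kron A B1) B2 *
          kron (kron (munit dA iA jA) (L1 (munit d1 i1 j1))) (L2 (munit d2 i2 j2))))"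
    by (rule mtrace_mult_apply_id_maps[OF kron_carrier[OF kron_carrier[OF A B1] B2] L1 L2])
  also have "\<dots> = (\<Sum>iA<dA. \<Sum>jA<dA. \<Sum>i1<d1. \<Sum>j1<d1. \<Sum>i2<d2. \<Sum>j2<d2.
      \<rho> $$ (iA * (d1 * d2) + i1 * d2 + i2, jA * (d1 * d2) + j1 * d2 + j2) *
      X $$ (jA * (d1 * d2) + j1 * d2 + j2, iA * (d1 * d2) + i1 * d2 + i2))"
    using A B1 B2 L1 L2
    by (intro sum.cong refl) (simp add: mtrace_kron3_mult_munit X_def index_kron3 dual_map_carrier)
  also have "\<dots> = mtrace (\<rho> * X)"
    using \<rho> X_carrier by (simp add: mtrace_mult sum_pairs_lessThan_mult3)
  also have "\<dots> = mtrace (X * \<rho>)"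
    by (rule mtrace_mult_commute[OF \<rho> X_carrier])
  finally show ?thesis
    by (simp add: X_def)
qed

theorem proposition1:
  fixes dA d1 d2 :: nat
    and \<rho> :: "complex mat"
    and L1 L2 :: "complex mat \<Rightarrow> complex mat"
    and M :: "'x::finite \<Rightarrow> 'a::finite \<Rightarrow> complex mat"
    and N1 :: "'y1::finite \<Rightarrow> 'b1::finite \<Rightarrow> complex mat"
    and N2 :: "'y2::finite \<Rightarrow> 'b2::finite \<Rightarrow> complex mat"
  assumes "density_op (dA * d1 * d2) \<rho>"
    and "linear_map_on d1 L1" and "positive_map d1 L1" and "trace_preserving d1 L1"
    and "linear_map_on d2 L2" and "positive_map d2 L2" and "trace_preserving d2 L2"
    and "\<forall>x. povm dA (M x)"
    and "\<forall>y1. povm d1 (N1 y1)"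
    and "\<forall>y2. povm d2 (N2 y2)"
  shows "quantum_realisable (\<lambda>a b1 b2 x y1 y2.
           mtrace (kron (kron (M x a) (N1 y1 b1)) (N2 y2 b2) * apply_id_maps dA d1 d2 L1 L2 \<rho>))"
proof -
  define F where "F = (\<lambda>y1 b1. dual_map d1 L1 (N1 y1 b1))"
  define G where "G = (\<lambda>y2 b2. dual_map d2 L2 (N2 y2 b2))"
  have "\<forall>y1. povm d1 (F y1)"
    unfolding F_def using povm_dual_map[OF assms(2-4)] assms(9) by blast
  moreover have "\<forall>y2. povm d2 (G y2)"
    unfolding G_def using povm_dual_map[OF assms(5-7)] assms(10) by blast
  moreover have
    "mtrace (kron (kron (M x a) (N1 y1 b1)) (N2 y2 b2) * apply_id_maps dA d1 d2 L1 L2 \<rho>) =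
      mtrace (kron (kron (M x a) (F y1 b1)) (G y2 b2) * \<rho>)" for a b1 b2 x y1 y2
    using assms unfolding F_def G_def
    by (intro mtrace_kron_mult_apply_id_maps)
      (simp_all add: povm_carrier density_op_def psd_carrier linear_map_on_def)
  ultimately show ?thesis
    using assms(1,8) unfolding quantum_realisable_def by blast
qed

end
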